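(* Consider the sequences generated by Algorithm 2 (described in the context) and let $B=\{k\ge1:\lambda_k\|y_k-x_{k-1}\|<\eta\}$. Then for all $k\in B$, $$\nu_k\in N_C(y_k)\quad\text{and}\quad\|F(y_k)+\nu_k\|\le\frac{2\hat\theta/L+\eta}{\lambda_k^2}.$$
   Context: Setting: $\mathcal H$ real Hilbert space; $C\subseteq\mathcal H$ nonempty closed convex; $N_C(x)=\{\nu:\langle\nu,y-x\rangle\le0\ \forall y\in C\}$ if $x\in C$, $N_C(x)=\emptyset$ otherwise. $F:C\to\mathcal H$ is monotone, continuously differentiable, and $\|F'(x)-F'(y)\|\le L\|x-y\|$ for all $x,y\in C$, with $L>0$; the set of $x$ with $0\in F(x)+N_C(x)$ is nonempty. For $y\in C$, $F_y(x):=F(y)+F'(y)(x-y)$. Parameters: $0\le\hat\sigma<1/2$; $0<\theta<(1-\hat\sigma)(1-2\hat\sigma)$; $\hat\theta:=\theta\big(\frac{\hat\sigma}{1-\hat\sigma}+\frac{\theta}{(1-\hat\sigma)^2}\big)$; $\eta>2\hat\theta/L$; $\tau:=\dfrac{2(\theta-\hat\theta)}{2\theta+\frac{\eta L}{2}+\sqrt{(2\theta+\frac{\eta L}{2})^2-4\theta(\theta-\hat\theta)}}$. Algorithm 2: input $x_0\in C$, $y_0:=x_0$, $\nu_0:=0$, $\lambda_1>0$ with $\lambda_1^2\|F(y_0)\|\le2\theta/L$. For $k=1,2,\dots$: if $F(y_{k-1})+\nu_{k-1}=0$, stop and return $y_{k-1}$. If $\frac{\lambda_kL}{2}\|\lambda_k(F(y_{k-1})+\nu_{k-1})+y_{k-1}-x_{k-1}\|\le\hat\theta$,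 set $y_k=y_{k-1}$, $\nu_k=\nu_{k-1}$; otherwise find any $(y_k,\nu_k)$ with $\nu_k\in N_C(y_k)$ and $\|\lambda_k(F_{y_{k-1}}(y_k)+\nu_k)+y_k-x_{k-1}\|\le\hat\sigma\|y_k-y_{k-1}\|$. Then, if $\lambda_k\|y_k-x_{k-1}\|\ge\eta$, set $x_k=x_{k-1}-\tau\lambda_k(F(y_k)+\nu_k)$ and $\lambda_{k+1}=(1-\tau)\lambda_k$; else set $x_k=x_{k-1}$ and $\lambda_{k+1}=\lambda_k/(1-\tau)$. Standing assumption: the algorithm never stops at the first test, i.e. $F(y_{k-1})+\nu_{k-1}\neq0$ for all $k$. *)

theory Defs
  imports "HOL-Analysis.Analysis"
begin

definition normal_cone :: "'a::real_inner set \<Rightarrow> 'a \<Rightarrow> 'a set" where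
  "normal_cone C x = (if x \<in> C then {\<nu>. \<forall>y\<in>C. inner \<nu> (y - x) \<le> 0} else {})"

definition linearization :: "('a::real_normed_vector \<Rightarrow> 'a) \<Rightarrow> ('a \<Rightarrow> 'a \<Rightarrow>\<^sub>L 'a) \<Rightarrow> 'a \<Rightarrow> 'a \<Rightarrow> 'a" where
  "linearization F F' y x = F y + blinfun_apply (F' y) (x - y)"

definition theta_hat :: "real \<Rightarrow> real \<Rightarrow> real" where
  "theta_hat \<sigma> \<theta> = \<theta> * (\<sigma> / (1 - \<sigma>) + \<theta> / (1 - \<sigma>)^2)"

definition tau_par :: "real \<Rightarrow> real \<Rightarrow> real \<Rightarrow> real \<Rightarrow> real" where
  "tau_par \<sigma> \<theta> \<eta> L =
     2 * (\<theta> - theta_hat \<sigma> \<theta>) /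
     (2 * \<theta> + \<eta> * L / 2 +
      sqrt ((2 * \<theta> + \<eta> * L / 2)^2 - 4 * \<theta> * (\<theta> - theta_hat \<sigma> \<theta>)))"

end

theory Submission
  imports Defs
begin

(* The iterates keep the invariant that nu_k is a normal vector at y_k and that the scaled
   residual lam_(k+1) L/2 |lam_(k+1) (F y_k + nu_k) + y_k - x_k| is at most theta.
   An inexact Newton step from such a point yields a residual (same lam and x) of at most
   theta_hat: since F'(y) + N_C is monotone, the step length is at most |residual|/(1 - sigma),
   and the Lipschitz continuity of F' bounds the linearization error by L/2 times its square.
   An extragradient update multiplies the residual by 1 - tau, a null update raises it to at
   most (theta_hat + tau eta L/2)/(1 - tau)^2, and this equals theta by the choice of tau.
   On a null step, |F y_k + nu_k| is then bounded by the triangle inequality, because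
   lam_k |y_k - x_(k-1)| < eta. *)

lemma convex_add_scaleR_diff:
  assumes "convex C" "u \<in> C" "v \<in> C" "0 \<le> t" "t \<le> 1"
  shows "u + t *\<^sub>R (v - u) \<in> C"
proof -
  have "(1 - t) *\<^sub>R u + t *\<^sub>R v \<in> C" using convexD_alt assms by blast
  thus ?thesis by (simp add: algebra_simps)
qed

lemma lipschitz_derivative_taylor_bound:
  fixes F :: "'a::real_normed_vector \<Rightarrow> 'b::real_inner" and F' :: "'a \<Rightarrow> 'a \<Rightarrow>\<^sub>L 'b"
  assumes "convex C"
    and deriv: "\<And>u. u \<in> C \<Longrightarrow> (F has_derivative blinfun_apply (F' u)) (at u within C)"
    and lip: "\<And>u v. u \<in> C \<Longrightarrow> v \<in> C \<Longrightarrow> norm (F' u - F' v) \<le> L * norm (u - v)"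
    and u: "u \<in> C" and v: "v \<in> C" and "0 \<le> L"
  shows "norm (F v - F u - F' u (v - u)) \<le> L / 2 * (norm (v - u))\<^sup>2"
proof -
  define d where "d = v - u"
  define g where "g = F v - F u - F' u d"
  define p where "p = (\<lambda>t::real. u + t *\<^sub>R d)"
  \<comment> \<open>Testing against \<open>g\<close> reduces the estimate to the scalar mean value theorem for \<open>\<psi>\<close>.\<close>
  define \<psi> where "\<psi> = (\<lambda>t::real. inner g (F (p t) - t *\<^sub>R F' u d) - norm g * (L/2) * t\<^sup>2 * (norm d)\<^sup>2)"
  define \<psi>' where "\<psi>' = (\<lambda>t h::real. inner g (F' (p t) (h *\<^sub>R d) - h *\<^sub>R F' u d) - norm g * L * t * h * (norm d)\<^sup>2)"
  have pC: "p t \<in> C" if "0 \<le> t" "t \<le> 1" for t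
    using convex_add_scaleR_diff[OF \<open>convex C\<close> u v that] by (simp add: p_def d_def)
  have "(\<psi> has_derivative \<psi>' t) (at t within {0..1})" if "0 \<le> t" "t \<le> 1" for t
  proof -
    have "(p has_derivative (\<lambda>h. h *\<^sub>R d)) (at t within {0..1})"
      unfolding p_def by (auto intro!: derivative_eq_intros)
    then have dF: "((\<lambda>s. F (p s)) has_derivative (\<lambda>h. F' (p t) (h *\<^sub>R d))) (at t within {0..1})"
      using has_derivative_in_compose2[of C F "\<lambda>x. blinfun_apply (F' x)" p "{0..1}" t]
        deriv pC that by (auto simp: image_subset_iff)
    show ?thesis unfolding \<psi>_def \<psi>'_def
      by (rule derivative_eq_intros dF refl)+
        (simp add: blinfun.scaleR_right inner_diff_right inner_scaleR_right algebra_simps)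
  qed
  then obtain s where s: "s \<in> {0..1}" "\<psi> 1 - \<psi> 0 = \<psi>' s 1"
    using mvt_very_simple[of 0 1 \<psi> \<psi>'] by force
  have "inner g ((F' (p s) - F' u) d) \<le> norm g * (norm (F' (p s) - F' u) * norm d)"
    by (meson norm_blinfun norm_cauchy_schwarz mult_left_mono norm_ge_zero order_trans)
  also have "\<dots> \<le> norm g * (L * s * norm d * norm d)"
  proof -
    have "norm (F' (p s) - F' u) \<le> L * norm (p s - u)" using lip pC s u by auto
    also have "norm (p s - u) = s * norm d" using s by (simp add: p_def)
    finally show ?thesis by (intro mult_left_mono mult_right_mono) (auto simp: mult.assoc)
  qed
  finally have "\<psi> 1 - \<psi> 0 \<le> 0"
    unfolding s \<psi>'_def by (simp add: blinfun.diff_left power2_eq_square algebra_simps)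
  moreover have "\<psi> 1 - \<psi> 0 = inner g g - norm g * (L/2) * (norm d)\<^sup>2"
    unfolding \<psi>_def g_def p_def d_def by (simp add: algebra_simps inner_diff_right)
  ultimately have "norm g * norm g \<le> norm g * (L/2 * (norm d)\<^sup>2)"
    by (simp add: power2_norm_eq_inner[symmetric] power2_eq_square algebra_simps)
  then have "norm g \<le> L/2 * (norm d)\<^sup>2"
    by (cases "norm g = 0") (auto simp: mult_le_cancel_left \<open>0 \<le> L\<close>)
  thus ?thesis by (simp add: g_def d_def)
qed

lemma monotone_derivative_nonneg:
  fixes F :: "'a::real_inner \<Rightarrow> 'a"
  assumes "convex C"
    and mono: "\<And>u v. u \<in> C \<Longrightarrow> v \<in> C \<Longrightarrow> 0 \<le> inner (F u - F v) (u - v)"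
    and deriv: "(F has_derivative f') (at u within C)"
    and u: "u \<in> C" and v: "v \<in> C"
  shows "0 \<le> inner (f' (v - u)) (v - u)"
proof (rule ccontr)
  define d where "d = v - u"
  define g where "g = (\<lambda>s::real. inner (F (u + s *\<^sub>R d)) d)"
  assume "\<not> 0 \<le> inner (f' (v - u)) (v - u)"
  then have neg: "inner (f' d) d < 0" by (simp add: d_def)
  have seg: "u + s *\<^sub>R d \<in> C" if "s \<in> {0..1}" for s
    using convex_add_scaleR_diff[OF \<open>convex C\<close> u v] that by (simp add: d_def)
  have "((\<lambda>s. u + s *\<^sub>R d) has_derivative (\<lambda>h. h *\<^sub>R d)) (at 0 within {0..1})"
    by (auto intro!: derivative_eq_intros)
  moreover have "(F has_derivative f') (at (u + 0 *\<^sub>R d) within (\<lambda>s. u + s *\<^sub>R d) ` {0..1})"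
    using has_derivative_subset[OF deriv] seg by (simp add: image_subset_iff)
  ultimately have "((\<lambda>s. F (u + s *\<^sub>R d)) has_derivative (\<lambda>h. f' (h *\<^sub>R d))) (at 0 within {0..1})"
    by (rule has_derivative_in_compose)
  then have "(g has_derivative (\<lambda>h. inner (f' (h *\<^sub>R d)) d)) (at 0 within {0..1})"
    unfolding g_def by (rule bounded_linear.has_derivative[OF bounded_linear_inner_left])
  moreover have "f' (h *\<^sub>R d) = h *\<^sub>R f' d" for h
    using has_derivative_bounded_linear[OF deriv] by (simp add: linear_simps)
  ultimately have "(g has_real_derivative inner (f' d) d) (at 0 within {0..1})"
    by (simp add: has_field_derivative_def mult.commute[of _ "inner (f' d) d"])
  then obtain \<delta> where "\<delta> > 0" and dec: "\<And>h. 0 < h \<Longrightarrow> h \<in> {0..1} \<Longrightarrow> h < \<delta> \<Longrightarrow> g h < g 0"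
    using has_real_derivative_neg_dec_right[OF _ neg] by force
  define h where "h = min (\<delta> / 2) 1"
  have h: "0 < h" "h \<in> {0..1}" "h < \<delta>" using \<open>\<delta> > 0\<close> by (auto simp: h_def)
  have "0 \<le> inner (F (u + h *\<^sub>R d) - F u) (h *\<^sub>R d)"
    using mono[OF seg[OF h(2)] u] by simp
  then have "g 0 \<le> g h" using h by (simp add: g_def inner_diff_left zero_le_mult_iff)
  with dec[OF h] show False by simp
qed

lemma normal_cone_memD: "w \<in> normal_cone C u \<Longrightarrow> u \<in> C"
  by (auto simp: normal_cone_def split: if_splits)

lemma normal_cone_inner_le: "w \<in> normal_cone C u \<Longrightarrow> p \<in> C \<Longrightarrow> inner w (p - u) \<le> 0"
  by (auto simp: normal_cone_def split: if_splits)

lemma inexact_newton_step_length: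
  fixes F :: "'a::real_inner \<Rightarrow> 'a" and F' :: "'a \<Rightarrow> 'a \<Rightarrow>\<^sub>L 'a"
  assumes "convex C"
    and mono: "\<And>u v. u \<in> C \<Longrightarrow> v \<in> C \<Longrightarrow> 0 \<le> inner (F u - F v) (u - v)"
    and deriv: "(F has_derivative blinfun_apply (F' yp)) (at yp within C)"
    and nup: "\<nu>p \<in> normal_cone C yp" and nu: "\<nu> \<in> normal_cone C y" and "0 \<le> lam"
    and newton: "norm (lam *\<^sub>R (linearization F F' yp y + \<nu>) + y - x) \<le> \<sigma> * norm (y - yp)"
  shows "(1 - \<sigma>) * norm (y - yp) \<le> norm (lam *\<^sub>R (F yp + \<nu>p) + yp - x)"
proof -
  define D where "D = y - yp"
  define E where "E = lam *\<^sub>R (linearization F F' yp y + \<nu>) + y - x"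
  define Z where "Z = lam *\<^sub>R (F yp + \<nu>p) + yp - x"
  have yp: "yp \<in> C" and y: "y \<in> C" using nup nu by (auto dest: normal_cone_memD)
  \<comment> \<open>\<open>inner (E - Z) D \<ge> inner D D\<close> by monotonicity of \<open>F' yp\<close> and of the normal cone.\<close>
  have "0 \<le> inner (F' yp D) D"
    unfolding D_def by (rule monotone_derivative_nonneg[OF \<open>convex C\<close> mono deriv yp y])
  moreover have "0 \<le> inner \<nu> D" using normal_cone_inner_le[OF nu yp] by (simp add: D_def inner_diff_right)
  moreover have "inner \<nu>p D \<le> 0" using normal_cone_inner_le[OF nup y] by (simp add: D_def)
  moreover have "inner (E - Z) D = lam * inner (F' yp D) D + lam * (inner \<nu> D - inner \<nu>p D) + inner D D"
    by (simp add: E_def Z_def D_def linearization_def inner_add_left inner_diff_left algebra_simps)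
  ultimately have "norm D * norm D \<le> inner (E - Z) D"
    using \<open>0 \<le> lam\<close> by (simp add: power2_norm_eq_inner[symmetric] power2_eq_square)
  also have "\<dots> \<le> (norm E + norm Z) * norm D"
    by (meson norm_cauchy_schwarz norm_triangle_ineq4 mult_right_mono norm_ge_zero order_trans)
  finally have "norm D \<le> norm E + norm Z"
    by (cases "norm D = 0") (auto simp: mult_le_cancel_right)
  moreover have "norm E \<le> \<sigma> * norm D" using newton by (simp add: E_def D_def)
  ultimately show ?thesis by (simp add: D_def Z_def algebra_simps)
qed

lemma inexact_newton_step_residual:
  fixes F :: "'a::real_inner \<Rightarrow> 'a" and F' :: "'a \<Rightarrow> 'a \<Rightarrow>\<^sub>L 'a"
  assumes "convex C"
    and deriv: "\<And>u. u \<in> C \<Longrightarrow> (F has_derivative blinfun_apply (F' u)) (at u within C)"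
    and lip: "\<And>u v. u \<in> C \<Longrightarrow> v \<in> C \<Longrightarrow> norm (F' u - F' v) \<le> L * norm (u - v)"
    and "0 \<le> L" and yp: "yp \<in> C" and y: "y \<in> C" and "0 \<le> lam"
    and newton: "norm (lam *\<^sub>R (linearization F F' yp y + \<nu>) + y - x) \<le> \<sigma> * norm (y - yp)"
  shows "norm (lam *\<^sub>R (F y + \<nu>) + y - x) \<le> \<sigma> * norm (y - yp) + lam * (L / 2 * (norm (y - yp))\<^sup>2)"
proof -
  have "lam *\<^sub>R (F y + \<nu>) + y - x
      = (lam *\<^sub>R (linearization F F' yp y + \<nu>) + y - x) + lam *\<^sub>R (F y - F yp - F' yp (y - yp))"
    by (simp add: linearization_def algebra_simps)
  also have "norm \<dots> \<le> \<sigma> * norm (y - yp) + lam * (L / 2 * (norm (y - yp))\<^sup>2)"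
    using norm_triangle_ineq newton \<open>0 \<le> lam\<close>
      lipschitz_derivative_taylor_bound[OF \<open>convex C\<close> deriv lip yp y \<open>0 \<le> L\<close>]
    by (smt (verit, best) mult_left_mono norm_scaleR abs_of_nonneg)
  finally show ?thesis .
qed

definition prox_residual :: "real \<Rightarrow> real \<Rightarrow> 'a::real_normed_vector \<Rightarrow> 'a \<Rightarrow> 'a \<Rightarrow> real" where
  "prox_residual L lam x y v = lam * L / 2 * norm (lam *\<^sub>R v + y - x)"

lemma prox_residual_inexact_newton_step:
  fixes F :: "'a::real_inner \<Rightarrow> 'a" and F' :: "'a \<Rightarrow> 'a \<Rightarrow>\<^sub>L 'a"
  assumes "convex C"
    and mono: "\<And>u v. u \<in> C \<Longrightarrow> v \<in> C \<Longrightarrow> 0 \<le> inner (F u - F v) (u - v)"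
    and deriv: "\<And>u. u \<in> C \<Longrightarrow> (F has_derivative blinfun_apply (F' u)) (at u within C)"
    and lip: "\<And>u v. u \<in> C \<Longrightarrow> v \<in> C \<Longrightarrow> norm (F' u - F' v) \<le> L * norm (u - v)"
    and "0 \<le> L" and "0 \<le> lam" and "0 \<le> \<sigma>" and "\<sigma> < 1"
    and nup: "\<nu>p \<in> normal_cone C yp" and nu: "\<nu> \<in> normal_cone C y"
    and newton: "norm (lam *\<^sub>R (linearization F F' yp y + \<nu>) + y - x) \<le> \<sigma> * norm (y - yp)"
    and start: "prox_residual L lam x yp (F yp + \<nu>p) \<le> \<theta>"
  shows "prox_residual L lam x y (F y + \<nu>) \<le> theta_hat \<sigma> \<theta>"
proof -
  have yp: "yp \<in> C" and y: "y \<in> C" using nup nu by (auto dest: normal_cone_memD)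
  define t where "t = lam * L / 2 * norm (y - yp)"
  define T where "T = \<theta> / (1 - \<sigma>)"
  have "0 \<le> lam * L / 2" using \<open>0 \<le> L\<close> \<open>0 \<le> lam\<close> by simp
  have "(1 - \<sigma>) * t \<le> lam * L / 2 * norm (lam *\<^sub>R (F yp + \<nu>p) + yp - x)"
    using mult_left_mono[OF inexact_newton_step_length[OF \<open>convex C\<close> mono deriv[OF yp] nup nu
        \<open>0 \<le> lam\<close> newton] \<open>0 \<le> lam * L / 2\<close>]
    by (simp add: t_def algebra_simps)
  also have "\<dots> \<le> \<theta>" using start by (simp add: prox_residual_def)
  finally have "t \<le> T" using \<open>\<sigma> < 1\<close> by (simp add: T_def field_simps)
  have "prox_residual L lam x y (F y + \<nu>)
      \<le> lam * L / 2 * (\<sigma> * norm (y - yp) + lam * (L / 2 * (norm (y - yp))\<^sup>2))"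
    unfolding prox_residual_def
    by (rule mult_left_mono[OF inexact_newton_step_residual[OF \<open>convex C\<close> deriv lip \<open>0 \<le> L\<close> yp y
          \<open>0 \<le> lam\<close> newton] \<open>0 \<le> lam * L / 2\<close>])
  also have "\<dots> = \<sigma> * t + t * t" by (simp add: t_def power2_eq_square algebra_simps)
  also have "\<dots> \<le> \<sigma> * T + T * T"
  proof -
    have "0 \<le> t" using \<open>0 \<le> lam * L / 2\<close> by (simp add: t_def)
    then show ?thesis using \<open>t \<le> T\<close> \<open>0 \<le> \<sigma>\<close> by (intro add_mono mult_left_mono mult_mono) auto
  qed
  also have "\<dots> = theta_hat \<sigma> \<theta>"
    using \<open>\<sigma> < 1\<close> by (simp add: theta_hat_def T_def power2_eq_square field_simps)
  finally show ?thesis .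
qed

lemma theta_hat_nonneg: "0 \<le> \<sigma> \<Longrightarrow> \<sigma> < 1 \<Longrightarrow> 0 \<le> \<theta> \<Longrightarrow> 0 \<le> theta_hat \<sigma> \<theta>"
  by (simp add: theta_hat_def)

lemma theta_hat_less:
  assumes "\<sigma> < 1" and "0 < \<theta>" and "\<theta> < (1 - \<sigma>) * (1 - 2 * \<sigma>)"
  shows "theta_hat \<sigma> \<theta> < \<theta>"
proof -
  have "\<sigma> * (1 - \<sigma>) + \<theta> < (1 - \<sigma>)\<^sup>2"
    using assms(3) by (simp add: power2_eq_square algebra_simps)
  then have "(\<sigma> * (1 - \<sigma>) + \<theta>) / (1 - \<sigma>)\<^sup>2 < 1"
    using \<open>\<sigma> < 1\<close> by simp
  then have "\<sigma> / (1 - \<sigma>) + \<theta> / (1 - \<sigma>)\<^sup>2 < 1"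
    using \<open>\<sigma> < 1\<close> by (simp add: power2_eq_square add_divide_distrib)
  then show ?thesis using \<open>0 < \<theta>\<close> by (simp add: theta_hat_def)
qed

lemma tau_par:
  assumes "0 \<le> theta_hat \<sigma> \<theta>" and "theta_hat \<sigma> \<theta> < \<theta>" and "0 < \<eta> * L"
  shows tau_par_pos: "0 < tau_par \<sigma> \<theta> \<eta> L"
    and tau_par_less_one: "tau_par \<sigma> \<theta> \<eta> L < 1"
    and tau_par_quadratic:
      "theta_hat \<sigma> \<theta> + tau_par \<sigma> \<theta> \<eta> L * \<eta> * L / 2 = \<theta> * (1 - tau_par \<sigma> \<theta> \<eta> L)\<^sup>2"
proof -
  define b where "b = 2 * \<theta> + \<eta> * L / 2"
  define c where "c = \<theta> - theta_hat \<sigma> \<theta>"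
  define s where "s = sqrt (b\<^sup>2 - 4 * \<theta> * c)"
  define t where "t = tau_par \<sigma> \<theta> \<eta> L"
  have "0 < c" "c \<le> \<theta>" "2 * \<theta> < b" using assms by (auto simp: b_def c_def)
  have "4 * \<theta> * c \<le> (2 * \<theta>)\<^sup>2" using \<open>c \<le> \<theta>\<close> \<open>0 < c\<close> by (simp add: power2_eq_square)
  also have "\<dots> < b\<^sup>2" using \<open>2 * \<theta> < b\<close> \<open>0 < c\<close> \<open>c \<le> \<theta>\<close> by (intro power_strict_mono) auto
  finally have "0 < s" and ss: "s * s = b\<^sup>2 - 4 * \<theta> * c" by (simp_all add: s_def)
  have t: "t = 2 * c / (b + s)" by (simp add: t_def tau_par_def b_def c_def s_def)
  have "0 < b + s" using \<open>2 * \<theta> < b\<close> \<open>0 < c\<close> \<open>c \<le> \<theta>\<close> \<open>0 < s\<close> by linarith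
  have tbs: "t * (b + s) = 2 * c" using \<open>0 < b + s\<close> by (simp add: t)
  show "0 < tau_par \<sigma> \<theta> \<eta> L" using \<open>0 < c\<close> \<open>0 < b + s\<close> by (simp add: t_def[symmetric] t)
  show "tau_par \<sigma> \<theta> \<eta> L < 1"
    using \<open>0 < c\<close> \<open>c \<le> \<theta>\<close> \<open>2 * \<theta> < b\<close> \<open>0 < s\<close> by (simp add: t_def[symmetric] t)
  \<comment> \<open>\<open>t\<close> is the smaller root of \<open>\<theta> t\<^sup>2 - b t + c\<close>, written in rationalized form.\<close>
  have "(\<theta> * t\<^sup>2 - b * t + c) * (b + s)\<^sup>2
      = \<theta> * (t * (b + s))\<^sup>2 - b * (t * (b + s)) * (b + s) + c * (b + s)\<^sup>2"
    by (simp add: power2_eq_square algebra_simps)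
  also have "\<dots> = c * (4 * \<theta> * c - b\<^sup>2 + s * s)"
    unfolding tbs by (simp add: power2_eq_square algebra_simps)
  finally have "\<theta> * t\<^sup>2 - b * t + c = 0" using ss \<open>0 < b + s\<close> by simp
  then show "theta_hat \<sigma> \<theta> + tau_par \<sigma> \<theta> \<eta> L * \<eta> * L / 2 = \<theta> * (1 - tau_par \<sigma> \<theta> \<eta> L)\<^sup>2"
    by (simp add: t_def[symmetric] b_def c_def power2_eq_square algebra_simps)
qed

lemma prox_residual_extragradient_step:
  "prox_residual L ((1 - \<tau>) * lam) (x - (\<tau> * lam) *\<^sub>R v) y v = (1 - \<tau>) * prox_residual L lam x y v"
proof -
  have eq: "((1 - \<tau>) * lam) *\<^sub>R v + y - (x - (\<tau> * lam) *\<^sub>R v) = lam *\<^sub>R v + y - x"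
    by (simp add: algebra_simps)
  show ?thesis unfolding prox_residual_def eq by simp
qed

lemma sq_norm_le_prox_residual:
  assumes "0 \<le> lam" and "0 < L"
  shows "lam\<^sup>2 * norm v \<le> 2 / L * prox_residual L lam x y v + lam * norm (y - x)"
proof -
  have "lam * norm v \<le> norm (lam *\<^sub>R v + y - x) + norm (y - x)"
    using norm_triangle_ineq4[of "lam *\<^sub>R v + y - x" "y - x"] \<open>0 \<le> lam\<close> by simp
  then have "lam * (lam * norm v) \<le> lam * (norm (lam *\<^sub>R v + y - x) + norm (y - x))"
    using \<open>0 \<le> lam\<close> by (rule mult_left_mono)
  then show ?thesis using \<open>0 < L\<close> by (simp add: prox_residual_def power2_eq_square algebra_simps)
qed

lemma prox_residual_null_step:
  assumes "0 < lam" and "0 < L" and "0 \<le> \<tau>" and "\<tau> < 1" and "lam * norm (y - x) \<le> \<eta>"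
  shows "prox_residual L (lam / (1 - \<tau>)) x y v \<le> (prox_residual L lam x y v + \<tau> * \<eta> * L / 2) / (1 - \<tau>)\<^sup>2"
proof -
  define r where "r = prox_residual L lam x y v"
  define lam' where "lam' = lam / (1 - \<tau>)"
  have "0 \<le> lam' - lam" using assms by (simp add: lam'_def field_simps)
  have "norm (lam' *\<^sub>R v + y - x) = norm ((lam *\<^sub>R v + y - x) + (lam' - lam) *\<^sub>R v)"
    by (rule arg_cong[where f = norm]) (simp add: algebra_simps)
  also have "\<dots> \<le> norm (lam *\<^sub>R v + y - x) + (lam' - lam) * norm v"
    using norm_triangle_ineq[of "lam *\<^sub>R v + y - x" "(lam' - lam) *\<^sub>R v"] \<open>0 \<le> lam' - lam\<close>
    by simp
  finally have "norm (lam' *\<^sub>R v + y - x) \<le> norm (lam *\<^sub>R v + y - x) + (lam' - lam) * norm v" .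
  then have "prox_residual L lam' x y v \<le> lam' * L / 2 * (norm (lam *\<^sub>R v + y - x) + (lam' - lam) * norm v)"
    unfolding prox_residual_def using assms by (intro mult_left_mono) (auto simp: lam'_def)
  also have "\<dots> = ((1 - \<tau>) * r + \<tau> * (L / 2 * (lam\<^sup>2 * norm v))) / (1 - \<tau>)\<^sup>2"
    using \<open>\<tau> < 1\<close> by (simp add: r_def prox_residual_def lam'_def power2_eq_square field_simps)
  also have "\<dots> \<le> ((1 - \<tau>) * r + \<tau> * (r + \<eta> * L / 2)) / (1 - \<tau>)\<^sup>2"
  proof -
    have "lam\<^sup>2 * norm v \<le> 2 / L * r + \<eta>"
      using sq_norm_le_prox_residual[of lam L v x y] assms by (simp add: r_def)
    then have "L / 2 * (lam\<^sup>2 * norm v) \<le> L / 2 * (2 / L * r + \<eta>)"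
      using \<open>0 < L\<close> by (intro mult_left_mono) auto
    then have "L / 2 * (lam\<^sup>2 * norm v) \<le> r + \<eta> * L / 2"
      using \<open>0 < L\<close> by (simp add: algebra_simps)
    then show ?thesis using assms by (intro divide_right_mono add_left_mono mult_left_mono) auto
  qed
  also have "\<dots> = (r + \<tau> * \<eta> * L / 2) / (1 - \<tau>)\<^sup>2" by (simp add: algebra_simps)
  finally show ?thesis by (simp add: r_def lam'_def)
qed

(* Algorithm 2 with iteration k + 1 written as Suc k, which avoids the truncated k - 1. *)
locale newton_extragradient =
  fixes C :: "'a::real_inner set" and F :: "'a \<Rightarrow> 'a" and F' :: "'a \<Rightarrow> 'a \<Rightarrow>\<^sub>L 'a"
    and L \<sigma> \<theta> \<eta> :: real and x y \<nu> :: "nat \<Rightarrow> 'a" and lam :: "nat \<Rightarrow> real"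
  assumes convex: "convex C"
    and monotone: "\<And>u v. u \<in> C \<Longrightarrow> v \<in> C \<Longrightarrow> 0 \<le> inner (F u - F v) (u - v)"
    and derivative: "\<And>u. u \<in> C \<Longrightarrow> (F has_derivative blinfun_apply (F' u)) (at u within C)"
    and lipschitz: "\<And>u v. u \<in> C \<Longrightarrow> v \<in> C \<Longrightarrow> norm (F' u - F' v) \<le> L * norm (u - v)"
    and L_pos: "0 < L" and \<sigma>_nonneg: "0 \<le> \<sigma>" and \<sigma>_less: "\<sigma> < 1 / 2"
    and \<theta>_pos: "0 < \<theta>" and \<theta>_less: "\<theta> < (1 - \<sigma>) * (1 - 2 * \<sigma>)"
    and \<eta>_greater: "2 * theta_hat \<sigma> \<theta> / L < \<eta>"
    and x_0: "x 0 \<in> C" and y_0: "y 0 = x 0" and \<nu>_0: "\<nu> 0 = 0"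
    and lam_1_pos: "0 < lam 1" and lam_1_bound: "(lam 1)\<^sup>2 * norm (F (y 0)) \<le> 2 * \<theta> / L"
    and skip_step: "\<And>k. prox_residual L (lam (Suc k)) (x k) (y k) (F (y k) + \<nu> k) \<le> theta_hat \<sigma> \<theta>
      \<Longrightarrow> y (Suc k) = y k \<and> \<nu> (Suc k) = \<nu> k"
    and newton_step: "\<And>k. \<not> prox_residual L (lam (Suc k)) (x k) (y k) (F (y k) + \<nu> k) \<le> theta_hat \<sigma> \<theta>
      \<Longrightarrow> \<nu> (Suc k) \<in> normal_cone C (y (Suc k)) \<and>
        norm (lam (Suc k) *\<^sub>R (linearization F F' (y k) (y (Suc k)) + \<nu> (Suc k)) + y (Suc k) - x k)
          \<le> \<sigma> * norm (y (Suc k) - y k)"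
    and extragradient_step: "\<And>k. \<eta> \<le> lam (Suc k) * norm (y (Suc k) - x k)
      \<Longrightarrow> x (Suc k) = x k - (tau_par \<sigma> \<theta> \<eta> L * lam (Suc k)) *\<^sub>R (F (y (Suc k)) + \<nu> (Suc k)) \<and>
        lam (Suc (Suc k)) = (1 - tau_par \<sigma> \<theta> \<eta> L) * lam (Suc k)"
    and null_step: "\<And>k. lam (Suc k) * norm (y (Suc k) - x k) < \<eta>
      \<Longrightarrow> x (Suc k) = x k \<and> lam (Suc (Suc k)) = lam (Suc k) / (1 - tau_par \<sigma> \<theta> \<eta> L)"
begin

abbreviation "\<theta>\<^sub>h \<equiv> theta_hat \<sigma> \<theta>"
abbreviation "\<tau> \<equiv> tau_par \<sigma> \<theta> \<eta> L"

lemma \<theta>\<^sub>h_nonneg: "0 \<le> \<theta>\<^sub>h"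
  using theta_hat_nonneg \<sigma>_nonneg \<sigma>_less \<theta>_pos by simp

lemma \<theta>\<^sub>h_less: "\<theta>\<^sub>h < \<theta>"
  using theta_hat_less \<sigma>_less \<theta>_pos \<theta>_less by simp

lemma \<eta>L_pos: "0 < \<eta> * L"
  using \<eta>_greater \<theta>\<^sub>h_nonneg L_pos by (simp add: field_simps)

lemmas \<tau>_pos = tau_par_pos[OF \<theta>\<^sub>h_nonneg \<theta>\<^sub>h_less \<eta>L_pos]
lemmas \<tau>_less_one = tau_par_less_one[OF \<theta>\<^sub>h_nonneg \<theta>\<^sub>h_less \<eta>L_pos]
lemmas \<tau>_quadratic = tau_par_quadratic[OF \<theta>\<^sub>h_nonneg \<theta>\<^sub>h_less \<eta>L_pos]

lemma y_update_residual:
  assumes nc: "\<nu> k \<in> normal_cone C (y k)" and "0 < lam (Suc k)"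
    and residual: "prox_residual L (lam (Suc k)) (x k) (y k) (F (y k) + \<nu> k) \<le> \<theta>"
  shows "\<nu> (Suc k) \<in> normal_cone C (y (Suc k)) \<and>
    prox_residual L (lam (Suc k)) (x k) (y (Suc k)) (F (y (Suc k)) + \<nu> (Suc k)) \<le> \<theta>\<^sub>h"
proof (cases "prox_residual L (lam (Suc k)) (x k) (y k) (F (y k) + \<nu> k) \<le> \<theta>\<^sub>h")
  case True
  then show ?thesis using skip_step nc by simp
next
  case False
  then have nc': "\<nu> (Suc k) \<in> normal_cone C (y (Suc k))"
    and newton: "norm (lam (Suc k) *\<^sub>R (linearization F F' (y k) (y (Suc k)) + \<nu> (Suc k)) + y (Suc k) - x k)
          \<le> \<sigma> * norm (y (Suc k) - y k)"
    using newton_step by auto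
  have "0 \<le> L" "0 \<le> lam (Suc k)" "\<sigma> < 1" using L_pos \<open>0 < lam (Suc k)\<close> \<sigma>_less by auto
  with nc' show ?thesis
    using prox_residual_inexact_newton_step[OF convex monotone derivative lipschitz
        \<open>0 \<le> L\<close> \<open>0 \<le> lam (Suc k)\<close> \<sigma>_nonneg \<open>\<sigma> < 1\<close> nc nc' newton residual]
    by blast
qed

lemma x_update_residual:
  assumes "0 < lam (Suc k)"
    and residual: "prox_residual L (lam (Suc k)) (x k) (y (Suc k)) (F (y (Suc k)) + \<nu> (Suc k)) \<le> \<theta>\<^sub>h"
  shows "0 < lam (Suc (Suc k)) \<and>
    prox_residual L (lam (Suc (Suc k))) (x (Suc k)) (y (Suc k)) (F (y (Suc k)) + \<nu> (Suc k)) \<le> \<theta>"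
proof (cases "\<eta> \<le> lam (Suc k) * norm (y (Suc k) - x k)")
  case True
  then have x: "x (Suc k) = x k - (\<tau> * lam (Suc k)) *\<^sub>R (F (y (Suc k)) + \<nu> (Suc k))"
    and lam: "lam (Suc (Suc k)) = (1 - \<tau>) * lam (Suc k)"
    using extragradient_step by auto
  have "prox_residual L (lam (Suc (Suc k))) (x (Suc k)) (y (Suc k)) (F (y (Suc k)) + \<nu> (Suc k))
      = (1 - \<tau>) * prox_residual L (lam (Suc k)) (x k) (y (Suc k)) (F (y (Suc k)) + \<nu> (Suc k))"
    unfolding x lam by (rule prox_residual_extragradient_step)
  also have "\<dots> \<le> (1 - \<tau>) * \<theta>\<^sub>h" using residual \<tau>_less_one by (intro mult_left_mono) auto
  also have "\<dots> \<le> \<theta>\<^sub>h" using \<tau>_pos \<tau>_less_one \<theta>\<^sub>h_nonneg by (intro mult_left_le_one_le) auto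
  finally show ?thesis
    using lam \<open>0 < lam (Suc k)\<close> \<tau>_less_one \<theta>\<^sub>h_less by simp
next
  case False
  then have x: "x (Suc k) = x k" and lam: "lam (Suc (Suc k)) = lam (Suc k) / (1 - \<tau>)"
    using null_step by auto
  have "prox_residual L (lam (Suc (Suc k))) (x (Suc k)) (y (Suc k)) (F (y (Suc k)) + \<nu> (Suc k))
      \<le> (prox_residual L (lam (Suc k)) (x k) (y (Suc k)) (F (y (Suc k)) + \<nu> (Suc k)) + \<tau> * \<eta> * L / 2)
        / (1 - \<tau>)\<^sup>2"
    unfolding x lam using False \<open>0 < lam (Suc k)\<close> L_pos \<tau>_pos \<tau>_less_one
    by (intro prox_residual_null_step) auto
  also have "\<dots> \<le> (\<theta>\<^sub>h + \<tau> * \<eta> * L / 2) / (1 - \<tau>)\<^sup>2"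
    using residual by (intro divide_right_mono) auto
  also have "\<dots> = \<theta>" using \<tau>_quadratic \<tau>_less_one by simp
  finally show ?thesis using lam \<open>0 < lam (Suc k)\<close> \<tau>_less_one by simp
qed

lemma residual_invariant:
  "\<nu> k \<in> normal_cone C (y k) \<and> 0 < lam (Suc k) \<and>
    prox_residual L (lam (Suc k)) (x k) (y k) (F (y k) + \<nu> k) \<le> \<theta>"
proof (induction k)
  case 0
  have "prox_residual L (lam 1) (x 0) (y 0) (F (y 0) + \<nu> 0) = L / 2 * ((lam 1)\<^sup>2 * norm (F (y 0)))"
    using y_0 \<nu>_0 lam_1_pos by (simp add: prox_residual_def power2_eq_square)
  also have "\<dots> \<le> \<theta>" using lam_1_bound L_pos by (simp add: field_simps)
  finally show ?case using x_0 y_0 \<nu>_0 lam_1_pos by (simp add: normal_cone_def)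
next
  case (Suc k)
  then show ?case using y_update_residual x_update_residual by blast
qed

lemma null_step_residual_bound:
  assumes "lam (Suc k) * norm (y (Suc k) - x k) < \<eta>"
  shows "\<nu> (Suc k) \<in> normal_cone C (y (Suc k)) \<and>
    norm (F (y (Suc k)) + \<nu> (Suc k)) \<le> (2 * \<theta>\<^sub>h / L + \<eta>) / (lam (Suc k))\<^sup>2"
proof -
  have "0 < lam (Suc k)" and nc: "\<nu> (Suc k) \<in> normal_cone C (y (Suc k))"
    and r: "prox_residual L (lam (Suc k)) (x k) (y (Suc k)) (F (y (Suc k)) + \<nu> (Suc k)) \<le> \<theta>\<^sub>h"
    using residual_invariant[of k] y_update_residual[of k] by auto
  have "(lam (Suc k))\<^sup>2 * norm (F (y (Suc k)) + \<nu> (Suc k))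
      \<le> 2 / L * prox_residual L (lam (Suc k)) (x k) (y (Suc k)) (F (y (Suc k)) + \<nu> (Suc k))
        + lam (Suc k) * norm (y (Suc k) - x k)"
    using \<open>0 < lam (Suc k)\<close> L_pos by (intro sq_norm_le_prox_residual) auto
  also have "\<dots> \<le> 2 / L * \<theta>\<^sub>h + \<eta>"
    using r assms L_pos by (intro add_mono mult_left_mono) auto
  finally show ?thesis using nc \<open>0 < lam (Suc k)\<close> by (simp add: field_simps)
qed

end

theorem proposition4p7:
  fixes C :: "'a::{real_inner, complete_space} set"
    and F :: "'a \<Rightarrow> 'a" and F' :: "'a \<Rightarrow> ('a \<Rightarrow>\<^sub>L 'a)"
    and L \<sigma> \<theta> \<eta> :: real
    and x y \<nu> :: "nat \<Rightarrow> 'a" and lam :: "nat \<Rightarrow> real"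
  assumes C_ne: "C \<noteq> {}" and C_closed: "closed C" and C_convex: "convex C"
    and F_mono: "\<forall>u\<in>C. \<forall>v\<in>C. inner (F u - F v) (u - v) \<ge> 0"
    and F_deriv: "\<forall>u\<in>C. (F has_derivative blinfun_apply (F' u)) (at u within C)"
    and F'_cont: "continuous_on C F'"
    and L_pos: "L > 0"
    and F'_lip: "\<forall>u\<in>C. \<forall>v\<in>C. norm (F' u - F' v) \<le> L * norm (u - v)"
    and sol: "\<exists>u w. w \<in> normal_cone C u \<and> F u + w = 0"
    and \<sigma>_ge: "0 \<le> \<sigma>" and \<sigma>_lt: "\<sigma> < 1/2"
    and \<theta>_pos: "0 < \<theta>" and \<theta>_lt: "\<theta> < (1 - \<sigma>) * (1 - 2 * \<sigma>)"
    and \<eta>_gt: "\<eta> > 2 * theta_hat \<sigma> \<theta> / L"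
    and x0: "x 0 \<in> C" and y0: "y 0 = x 0" and \<nu>0: "\<nu> 0 = 0"
    and lam1_pos: "lam 1 > 0"
    and lam1_bd: "(lam 1)^2 * norm (F (y 0)) \<le> 2 * \<theta> / L"
    and no_stop: "\<forall>k\<ge>1. F (y (k - 1)) + \<nu> (k - 1) \<noteq> 0"
    and step_skip: "\<forall>k\<ge>1.
          lam k * L / 2 * norm (lam k *\<^sub>R (F (y (k - 1)) + \<nu> (k - 1)) + y (k - 1) - x (k - 1))
            \<le> theta_hat \<sigma> \<theta>
          \<longrightarrow> y k = y (k - 1) \<and> \<nu> k = \<nu> (k - 1)"
    and step_solve: "\<forall>k\<ge>1.
          \<not> (lam k * L / 2 * norm (lam k *\<^sub>R (F (y (k - 1)) + \<nu> (k - 1)) + y (k - 1) - x (k - 1))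
            \<le> theta_hat \<sigma> \<theta>)
          \<longrightarrow> \<nu> k \<in> normal_cone C (y k) \<and>
              norm (lam k *\<^sub>R (linearization F F' (y (k - 1)) (y k) + \<nu> k) + y k - x (k - 1))
                \<le> \<sigma> * norm (y k - y (k - 1))"
    and step_ext: "\<forall>k\<ge>1. lam k * norm (y k - x (k - 1)) \<ge> \<eta> \<longrightarrow>
          x k = x (k - 1) - (tau_par \<sigma> \<theta> \<eta> L * lam k) *\<^sub>R (F (y k) + \<nu> k) \<and>
          lam (k + 1) = (1 - tau_par \<sigma> \<theta> \<eta> L) * lam k"
    and step_null: "\<forall>k\<ge>1. lam k * norm (y k - x (k - 1)) < \<eta> \<longrightarrow>
          x k = x (k - 1) \<and> lam (k + 1) = lam k / (1 - tau_par \<sigma> \<theta> \<eta> L)"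
  shows "\<forall>k\<in>{k. k \<ge> 1 \<and> lam k * norm (y k - x (k - 1)) < \<eta>}.
           \<nu> k \<in> normal_cone C (y k) \<and>
           norm (F (y k) + \<nu> k) \<le> (2 * theta_hat \<sigma> \<theta> / L + \<eta>) / (lam k)^2"
proof -
  have shift: "\<And>P k. \<forall>j\<ge>1. P j \<Longrightarrow> P (Suc k)" by simp
  interpret newton_extragradient C F F' L \<sigma> \<theta> \<eta> x y \<nu> lam
    using assms shift[OF step_skip] shift[OF step_solve] shift[OF step_ext] shift[OF step_null]
    unfolding newton_extragradient_def prox_residual_def by simp
  show ?thesis
  proof
    fix k assume "k \<in> {k. 1 \<le> k \<and> lam k * norm (y k - x (k - 1)) < \<eta>}"
    then obtain j where "k = Suc j" and "lam (Suc j) * norm (y (Suc j) - x j) < \<eta>"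
      by (cases k) auto
    then show "\<nu> k \<in> normal_cone C (y k) \<and> norm (F (y k) + \<nu> k) \<le> (2 * theta_hat \<sigma> \<theta> / L + \<eta>) / (lam k)\<^sup>2"
      using null_step_residual_bound by simp
  qed
qed

end
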